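(* Let $\Gamma$ be a bipartite graph and let $f:\Gamma\to\Gamma$ be a graph map that preserves the bipartite structure and maps each edge to an edge path of length at least $1$. Then the split map $S(f):S(\Gamma)\to S(\Gamma)$ is a traintrack map.
   Context: A graph map sends vertices to vertices and each edge to an edge path (backtracking allowed). Let $\Gamma$ have vertex parts $V_0,V_1$ and edges $x_1,x_2,\dots$ each oriented from its $V_0$-endpoint to its $V_1$-endpoint; preserving the bipartite structure means $f(V_0)\subset V_0$, $f(V_1)\subset V_1$, so each $f(x_i)$ has odd number of edges $\|f(x_i)\|$. Prototype maps on $P_7$ (vertices $v_0,v_1$, edges $a,\dots,g$ oriented $v_0\to v_1$, uppercase = reversed): $\phi_1=\mathrm{id}$ and, for $m\ge0$, $\phi_{3+2m}$: $a\mapsto aG(aB)^ma$, $b\mapsto bD(bC)^mb$, $c\mapsto cF(cA)^mc$, $d\mapsto aB(aB)^ma$, $e\mapsto cB(aB)^ma$, $f\mapsto aC(aB)^ma$, $g\mapsto bE(bA)^mb$. The split graph $S(\Gamma)$ replaces each edge $x_i$ by seven parallel edges $a_i,\dots,g_i$ with the same endpoints and orientation. The split map $S(f)$ sends $y_i$ ($y\in\{a,\dots,g\}$) to the path obtained from the word $\phi_{\|f(x_i)\|}(y)$ by giving its $t$-th letter the subscript of the $t$-th edge of $f(x_i)$. Traintrack map: a direction at a vertex is an oriented edge germ leaving it; a turn is an unordered pair of directions at a vertex; a traintrack structure is a partition of turns into legal and illegal ones with every backtracking turn (a direction paired with itself) illegal; a path is legal if it is locally injective and makes only legal turns. A graph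 map $h$ is taut if it is a local embedding on the interior of each edge, and it is a traintrack map if it is taut and there is a traintrack structure such that $h$ sends legal turns to legal turns and every edge to a legal path. *)

theory Defs
  imports Main
begin

(* An oriented edge is (e, True) (traversed src -> tgt)
   or (e, False) (traversed tgt -> src, the "uppercase" letter). *)

type_synonym 'e oedge = "'e \<times> bool"

definition ostart :: "('e \<Rightarrow> 'v) \<Rightarrow> ('e \<Rightarrow> 'v) \<Rightarrow> 'e oedge \<Rightarrow> 'v" where
  "ostart src tgt d = (if snd d then src (fst d) else tgt (fst d))"

definition oend :: "('e \<Rightarrow> 'v) \<Rightarrow> ('e \<Rightarrow> 'v) \<Rightarrow> 'e oedge \<Rightarrow> 'v" where
  "oend src tgt d = (if snd d then tgt (fst d) else src (fst d))"

definition orev :: "'e oedge \<Rightarrow> 'e oedge" where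
  "orev d = (fst d, \<not> snd d)"

definition rev_path :: "'e oedge list \<Rightarrow> 'e oedge list" where
  "rev_path p = rev (map orev p)"

definition edge_path :: "('e \<Rightarrow> 'v) \<Rightarrow> ('e \<Rightarrow> 'v) \<Rightarrow> 'v \<Rightarrow> 'e oedge list \<Rightarrow> 'v \<Rightarrow> bool" where
  "edge_path src tgt u p w =
     (if p = [] then u = w
      else ostart src tgt (hd p) = u \<and> oend src tgt (last p) = w \<and>
           (\<forall>i. i + 1 < length p \<longrightarrow> oend src tgt (p ! i) = ostart src tgt (p ! (i + 1))))"

definition graph_map :: "('e \<Rightarrow> 'v) \<Rightarrow> ('e \<Rightarrow> 'v) \<Rightarrow> ('v \<Rightarrow> 'v) \<Rightarrow> ('e \<Rightarrow> 'e oedge list) \<Rightarrow> bool" where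
  "graph_map src tgt hv he = (\<forall>e. edge_path src tgt (hv (src e)) (he e) (hv (tgt e)))"

definition oimg :: "('e \<Rightarrow> 'e oedge list) \<Rightarrow> 'e oedge \<Rightarrow> 'e oedge list" where
  "oimg he d = (if snd d then he (fst d) else rev_path (he (fst d)))"

(* taut: local embedding on the interior of each edge, i.e. each edge goes to a
   nondegenerate edge path without backtracking *)
definition taut :: "('e \<Rightarrow> 'e oedge list) \<Rightarrow> bool" where
  "taut he = (\<forall>e. he e \<noteq> [] \<and>
      (\<forall>i. i + 1 < length (he e) \<longrightarrow> he e ! (i + 1) \<noteq> orev (he e ! i)))"

(* Directions at a vertex v are the oriented edges d with ostart d = v (the germ
   of d at its initial point); a turn is an unordered pair of directions at the
   same vertex.  A traintrack structure is given by the (symmetric) relation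
   "the turn {d1,d2} is legal"; all other turns are illegal; backtracking turns
   {d,d} must be illegal. *)
definition tt_structure :: "('e \<Rightarrow> 'v) \<Rightarrow> ('e \<Rightarrow> 'v) \<Rightarrow> ('e oedge \<Rightarrow> 'e oedge \<Rightarrow> bool) \<Rightarrow> bool" where
  "tt_structure src tgt legal =
     ((\<forall>d1 d2. legal d1 d2 \<longrightarrow> ostart src tgt d1 = ostart src tgt d2) \<and>
      (\<forall>d1 d2. legal d1 d2 = legal d2 d1) \<and>
      (\<forall>d. \<not> legal d d))"

(* legal path: locally injective and all turns taken are legal; the turn taken
   between consecutive edges p!i, p!(i+1) is {orev (p!i), p!(i+1)} *)
definition legal_path :: "('e oedge \<Rightarrow> 'e oedge \<Rightarrow> bool) \<Rightarrow> 'e oedge list \<Rightarrow> bool" where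
  "legal_path legal p =
     (\<forall>i. i + 1 < length p \<longrightarrow>
        p ! (i + 1) \<noteq> orev (p ! i) \<and> legal (orev (p ! i)) (p ! (i + 1)))"

definition traintrack_map :: "('e \<Rightarrow> 'v) \<Rightarrow> ('e \<Rightarrow> 'v) \<Rightarrow> ('v \<Rightarrow> 'v) \<Rightarrow> ('e \<Rightarrow> 'e oedge list) \<Rightarrow> bool" where
  "traintrack_map src tgt hv he =
     (graph_map src tgt hv he \<and> taut he \<and>
      (\<exists>legal. tt_structure src tgt legal \<and>
         (\<forall>d1 d2. legal d1 d2 \<longrightarrow> legal (hd (oimg he d1)) (hd (oimg he d2))) \<and>
         (\<forall>e. legal_path legal (he e))))"

definition bipartite_oriented :: "('e \<Rightarrow> 'v) \<Rightarrow> ('e \<Rightarrow> 'v) \<Rightarrow> 'v set \<Rightarrow> bool" where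
  "bipartite_oriented src tgt V0 = (\<forall>e. src e \<in> V0 \<and> tgt e \<notin> V0)"

datatype letter = La | Lb | Lc | Ld | Le | Lf | Lg

definition rep :: "nat \<Rightarrow> 'a list \<Rightarrow> 'a list" where
  "rep m xs = concat (replicate m xs)"

(* prototype maps phi_n on P_7; (x, True) = lowercase x, (x, False) = uppercase X.
   phi_1 = id, phi_(3+2m) as in the paper (only odd n are used). *)
definition phi :: "nat \<Rightarrow> letter \<Rightarrow> letter oedge list" where
  "phi n y = (if n = 1 then [(y, True)] else
    (let m = (n - 3) div 2 in
     case y of
       La \<Rightarrow> [(La,True),(Lg,False)] @ rep m [(La,True),(Lb,False)] @ [(La,True)]
     | Lb \<Rightarrow> [(Lb,True),(Ld,False)] @ rep m [(Lb,True),(Lc,False)] @ [(Lb,True)]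
     | Lc \<Rightarrow> [(Lc,True),(Lf,False)] @ rep m [(Lc,True),(La,False)] @ [(Lc,True)]
     | Ld \<Rightarrow> [(La,True),(Lb,False)] @ rep m [(La,True),(Lb,False)] @ [(La,True)]
     | Le \<Rightarrow> [(Lc,True),(Lb,False)] @ rep m [(La,True),(Lb,False)] @ [(La,True)]
     | Lf \<Rightarrow> [(La,True),(Lc,False)] @ rep m [(La,True),(Lb,False)] @ [(La,True)]
     | Lg \<Rightarrow> [(Lb,True),(Le,False)] @ rep m [(Lb,True),(La,False)] @ [(Lb,True)]))"

(* split graph S(Gamma): edge (x, y) parallel to x *)
definition split_src :: "('e \<Rightarrow> 'v) \<Rightarrow> ('e \<times> letter) \<Rightarrow> 'v" where
  "split_src src ey = src (fst ey)"

definition split_tgt :: "('e \<Rightarrow> 'v) \<Rightarrow> ('e \<times> letter) \<Rightarrow> 'v" where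
  "split_tgt tgt ey = tgt (fst ey)"

(* split map S(f) on edges: y_i |-> phi_{|f(x_i)|}(y) with the t-th letter given
   the subscript of the t-th edge of f(x_i) (orientation taken from the word) *)
definition split_map :: "('e \<Rightarrow> 'e oedge list) \<Rightarrow> ('e \<times> letter) \<Rightarrow> ('e \<times> letter) oedge list" where
  "split_map fe ey =
     map (\<lambda>((l, b), (x, _)). ((x, l), b)) (zip (phi (length (fe (fst ey))) (snd ey)) (fe (fst ey)))"

end

theory Submission
  imports Defs
begin

(* Since f preserves the bipartition, each path f(x_i) starts in V0 and alternates forward and
   backward edges, so it has odd length n and the same orientation pattern as the word phi_n(y).
   Hence S(f)(y_i) is the lift of f(x_i) to S(Gamma) labelled by the letters of phi_n(y), and
   in particular an edge path.  Call a turn of S(Gamma) legal when its two letters form one of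
   the pairs ab, ac, bc, ag, bd, cf, be.  Consecutive letters of every phi_n(y) form such a pair,
   so all edges go to legal paths.  The derivative of S(f) sends a direction labelled y to one
   labelled by the first or last letter of phi_n(y), i.e. y itself or its image under a map
   that can be applied to one letter of a legal pair without making it illegal; so legal turns
   go to legal turns. *)

lemma edge_path_conv_nth:
  assumes "p \<noteq> []"
  shows "edge_path s t u p w \<longleftrightarrow>
    ostart s t (p ! 0) = u \<and> oend s t (p ! (length p - 1)) = w \<and>
    (\<forall>i. Suc i < length p \<longrightarrow> oend s t (p ! i) = ostart s t (p ! Suc i))"
  using assms by (simp add: edge_path_def hd_conv_nth last_conv_nth)

lemma bipartite_ostart_iff:
  "bipartite_oriented s t V0 \<Longrightarrow> ostart s t d \<in> V0 \<longleftrightarrow> snd d"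
  by (auto simp: bipartite_oriented_def ostart_def)

lemma bipartite_oend_iff:
  "bipartite_oriented s t V0 \<Longrightarrow> oend s t d \<in> V0 \<longleftrightarrow> \<not> snd d"
  by (auto simp: bipartite_oriented_def oend_def)

lemma bipartite_edge_path_orientation:
  assumes bip: "bipartite_oriented s t V0" and path: "edge_path s t u p w" and "u \<in> V0"
    and "i < length p"
  shows "snd (p ! i) \<longleftrightarrow> even i"
  using \<open>i < length p\<close>
proof (induction i)
  case 0
  then show ?case
    using path \<open>u \<in> V0\<close> bipartite_ostart_iff[OF bip, of "p ! 0"]
    by (auto simp: edge_path_conv_nth)
next
  case (Suc i)
  then have "p \<noteq> []" and "Suc i < length p"
    by auto
  then have "ostart s t (p ! Suc i) = oend s t (p ! i)"
    using path by (simp add: edge_path_conv_nth)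
  then show ?case
    using Suc bipartite_ostart_iff[OF bip, of "p ! Suc i"] bipartite_oend_iff[OF bip, of "p ! i"]
    by auto
qed

lemma bipartite_edge_path_odd_length:
  assumes bip: "bipartite_oriented s t V0" and path: "edge_path s t u p w"
    and "u \<in> V0" and "w \<notin> V0"
  shows "odd (length p)"
proof -
  have "p \<noteq> []"
    using path assms(3,4) by (auto simp: edge_path_def)
  then have "snd (p ! (length p - 1))"
    using path \<open>w \<notin> V0\<close> bipartite_oend_iff[OF bip, of "p ! (length p - 1)"]
    by (auto simp: edge_path_conv_nth)
  then have "even (length p - 1)"
    using bipartite_edge_path_orientation[OF assms(1-3)] \<open>p \<noteq> []\<close> by simp
  then show ?thesis
    using \<open>p \<noteq> []\<close> by (cases "length p") auto
qed

lemma ostart_hd_oimg: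
  assumes "graph_map s t hv he" and "he (fst d) \<noteq> []"
  shows "ostart s t (hd (oimg he d)) = hv (ostart s t d)"
proof -
  have "ostart s t (hd (he (fst d))) = hv (s (fst d))"
    and "oend s t (last (he (fst d))) = hv (t (fst d))"
    using assms by (auto simp: graph_map_def edge_path_def)
  then show ?thesis
    using assms(2)
    by (auto simp: oimg_def rev_path_def hd_rev last_map ostart_def oend_def orev_def)
qed

lemma taut_if_legal_paths:
  assumes "\<And>e. he e \<noteq> []" and "\<And>e. legal_path legal (he e)"
  shows "taut he"
  using assms by (simp add: taut_def legal_path_def)

definition legal_letters :: "letter \<Rightarrow> letter \<Rightarrow> bool" where
  "legal_letters l1 l2 \<longleftrightarrow>
     {l1, l2} \<in> {{La, Lb}, {La, Lc}, {Lb, Lc}, {La, Lg}, {Lb, Ld}, {Lc, Lf}, {Lb, Le}}"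

lemma legal_letters_sym: "legal_letters l1 l2 \<longleftrightarrow> legal_letters l2 l1"
  by (simp add: legal_letters_def insert_commute)

lemma legal_letters_irrefl: "\<not> legal_letters l l"
  by (cases l) (auto simp: legal_letters_def doubleton_eq_iff)

fun lead_letter :: "letter \<Rightarrow> letter" where
  "lead_letter La = La" | "lead_letter Lb = Lb" | "lead_letter Lc = Lc" | "lead_letter Ld = La"
| "lead_letter Le = Lc" | "lead_letter Lf = La" | "lead_letter Lg = Lb"

fun second_letter :: "letter \<Rightarrow> letter" where
  "second_letter La = Lg" | "second_letter Lb = Ld" | "second_letter Lc = Lf" | "second_letter Ld = Lb"
| "second_letter Le = Lb" | "second_letter Lf = Lc" | "second_letter Lg = Le"

fun main_letter :: "letter \<Rightarrow> letter" where
  "main_letter La = La" | "main_letter Lb = Lb" | "main_letter Lc = Lc" | "main_letter Ld = La"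
| "main_letter Le = La" | "main_letter Lf = La" | "main_letter Lg = Lb"

fun alt_letter :: "letter \<Rightarrow> letter" where
  "alt_letter La = Lb" | "alt_letter Lb = Lc" | "alt_letter Lc = La" | "alt_letter Ld = Lb"
| "alt_letter Le = Lb" | "alt_letter Lf = Lb" | "alt_letter Lg = La"

lemma legal_letters_lead_letter: "legal_letters l1 l2 \<Longrightarrow> legal_letters (lead_letter l1) l2"
  by (cases l1; cases l2) (auto simp: legal_letters_def doubleton_eq_iff)

lemma legal_letters_main_letter: "legal_letters l1 l2 \<Longrightarrow> legal_letters (main_letter l1) l2"
  by (cases l1; cases l2) (auto simp: legal_letters_def doubleton_eq_iff)

definition proto_word :: "letter \<Rightarrow> letter \<Rightarrow> letter \<Rightarrow> letter \<Rightarrow> nat \<Rightarrow> letter oedge list" where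
  "proto_word u0 v1 u v m = [(u0, True), (v1, False)] @ rep m [(u, True), (v, False)] @ [(u, True)]"

lemma phi_eq_proto_word:
  "n \<noteq> 1 \<Longrightarrow> phi n y =
     proto_word (lead_letter y) (second_letter y) (main_letter y) (alt_letter y) ((n - 3) div 2)"
  by (cases y) (simp_all add: phi_def proto_word_def)

lemma length_rep: "length (rep m xs) = m * length xs"
  by (induction m) (auto simp: rep_def)

lemma nth_rep_pair: "j < 2 * m \<Longrightarrow> rep m [a, b] ! j = (if even j then a else b)"
proof (induction m arbitrary: j)
  case (Suc m)
  have "rep (Suc m) [a, b] = a # b # rep m [a, b]"
    by (simp add: rep_def)
  with Suc show ?case
    by (auto simp: nth_Cons split: nat.split)
qed simp

lemma length_proto_word: "length (proto_word u0 v1 u v m) = 2 * m + 3"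
  by (simp add: proto_word_def length_rep)

lemma nth_proto_word:
  assumes "i < 2 * m + 3"
  shows "proto_word u0 v1 u v m ! i =
    (if i = 0 then (u0, True) else if i = 1 then (v1, False)
     else if even i then (u, True) else (v, False))"
proof (cases "i < 2")
  case False
  define k where "k = i - 2"
  with False assms have i: "i = Suc (Suc k)" and "k \<le> 2 * m"
    by simp_all
  then show ?thesis
    using nth_rep_pair[of k m "(u, True)" "(v, False)"]
    by (cases "k = 2 * m") (simp_all add: proto_word_def nth_append length_rep)
qed (auto simp: proto_word_def less_2_cases_iff)

lemma phi_one: "phi (Suc 0) y = [(y, True)]"
  by (simp add: phi_def)

lemma length_phi: "odd n \<Longrightarrow> length (phi n y) = n"
proof (cases "n = 1")
  case False
  moreover assume "odd n"
  ultimately have "2 * ((n - 3) div 2) + 3 = n"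
    by (auto elim!: oddE)
  with False show ?thesis
    by (simp add: phi_eq_proto_word length_proto_word)
qed (simp add: phi_one)

lemma snd_nth_phi: "i < length (phi n y) \<Longrightarrow> snd (phi n y ! i) \<longleftrightarrow> even i"
  by (cases "n = 1") (simp_all add: phi_one phi_eq_proto_word length_proto_word nth_proto_word)

lemma legal_letters_proto_word:
  assumes "legal_letters u0 v1" "legal_letters v1 u" "legal_letters u v"
    and "Suc i < length (proto_word u0 v1 u v m)"
  shows "legal_letters (fst (proto_word u0 v1 u v m ! i)) (fst (proto_word u0 v1 u v m ! Suc i))"
  using assms legal_letters_sym[of u v] by (simp add: nth_proto_word length_proto_word)

definition phi_letters :: "nat \<Rightarrow> letter \<Rightarrow> letter list" where
  "phi_letters n y = map fst (phi n y)"

lemma length_phi_letters: "odd n \<Longrightarrow> length (phi_letters n y) = n"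
  by (simp add: phi_letters_def length_phi)

lemma legal_letters_phi_letters:
  assumes "Suc i < length (phi_letters n y)"
  shows "legal_letters (phi_letters n y ! i) (phi_letters n y ! Suc i)"
proof (cases "n = 1")
  case True
  with assms show ?thesis
    by (simp add: phi_letters_def phi_one)
next
  case False
  have "legal_letters (lead_letter y) (second_letter y)"
    and "legal_letters (second_letter y) (main_letter y)"
    and "legal_letters (main_letter y) (alt_letter y)"
    by (cases y; simp add: legal_letters_def insert_commute)+
  with False assms show ?thesis
    by (simp add: phi_letters_def phi_eq_proto_word legal_letters_proto_word)
qed

lemma hd_phi_letters: "hd (phi_letters n y) = (if n = 1 then y else lead_letter y)"
  by (cases "n = 1") (simp_all add: phi_letters_def phi_one phi_eq_proto_word proto_word_def)

lemma last_phi_letters: "last (phi_letters n y) = (if n = 1 then y else main_letter y)"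
  by (cases "n = 1") (simp_all add: phi_letters_def phi_one phi_eq_proto_word proto_word_def)

lemma legal_letters_retraction:
  assumes retract: "\<And>l1 l2. legal_letters l1 l2 \<Longrightarrow> legal_letters (F l1) l2"
    and "legal_letters y1 y2"
  shows "legal_letters (if c1 then y1 else F y1) (if c2 then y2 else F y2)"
proof -
  have "legal_letters (F y1) y2" and "legal_letters (F y2) y1"
    using assms legal_letters_sym by blast+
  moreover have "legal_letters (F y2) (F y1)"
    using retract legal_letters_sym calculation(1) by blast
  ultimately show ?thesis
    using assms(2) legal_letters_sym by (cases c1; cases c2) simp_all
qed

lemma legal_letters_hd_phi_letters:
  "legal_letters y1 y2 \<Longrightarrow>
     legal_letters (hd (phi_letters n1 y1)) (hd (phi_letters n2 y2))"
  unfolding hd_phi_letters by (rule legal_letters_retraction[OF legal_letters_lead_letter])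

lemma legal_letters_last_phi_letters:
  "legal_letters y1 y2 \<Longrightarrow>
     legal_letters (last (phi_letters n1 y1)) (last (phi_letters n2 y2))"
  unfolding last_phi_letters by (rule legal_letters_retraction[OF legal_letters_main_letter])

definition lift_path :: "letter list \<Rightarrow> 'e oedge list \<Rightarrow> ('e \<times> letter) oedge list" where
  "lift_path ls p = map (\<lambda>(l, (x, b)). ((x, l), b)) (zip ls p)"

lemma length_lift_path [simp]: "length (lift_path ls p) = min (length ls) (length p)"
  by (simp add: lift_path_def)

lemma lift_path_eq_Nil_iff [simp]: "lift_path ls p = [] \<longleftrightarrow> ls = [] \<or> p = []"
  by (simp add: lift_path_def)

lemma nth_lift_path:
  "i < length ls \<Longrightarrow> i < length p \<Longrightarrow> lift_path ls p ! i = ((fst (p ! i), ls ! i), snd (p ! i))"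
  by (simp add: lift_path_def case_prod_beta)

lemma ostart_split [simp]:
  "ostart (split_src src) (split_tgt tgt) d = ostart src tgt (fst (fst d), snd d)"
  by (simp add: ostart_def split_src_def split_tgt_def)

lemma oend_split [simp]:
  "oend (split_src src) (split_tgt tgt) d = oend src tgt (fst (fst d), snd d)"
  by (simp add: oend_def split_src_def split_tgt_def)

lemma bipartite_oriented_split:
  "bipartite_oriented src tgt V0 \<Longrightarrow> bipartite_oriented (split_src src) (split_tgt tgt) V0"
  by (simp add: bipartite_oriented_def split_src_def split_tgt_def)

lemma edge_path_lift_path:
  assumes "edge_path src tgt u p w" and "length ls = length p"
  shows "edge_path (split_src src) (split_tgt tgt) u (lift_path ls p) w"
proof (cases "p = []")
  case True
  with assms show ?thesis
    by (simp add: lift_path_def edge_path_def)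
next
  case False
  with assms have "lift_path ls p \<noteq> []"
    by auto
  with False assms show ?thesis
    by (simp add: edge_path_conv_nth nth_lift_path)
qed

definition split_legal ::
  "('e \<Rightarrow> 'v) \<Rightarrow> ('e \<Rightarrow> 'v) \<Rightarrow> ('e \<times> letter) oedge \<Rightarrow> ('e \<times> letter) oedge \<Rightarrow> bool" where
  "split_legal src tgt d1 d2 \<longleftrightarrow>
     ostart (split_src src) (split_tgt tgt) d1 = ostart (split_src src) (split_tgt tgt) d2 \<and>
     legal_letters (snd (fst d1)) (snd (fst d2))"

lemma tt_structure_split_legal: "tt_structure (split_src src) (split_tgt tgt) (split_legal src tgt)"
  unfolding tt_structure_def split_legal_def
  using legal_letters_sym legal_letters_irrefl by metis

lemma legal_path_lift_path:
  assumes path: "edge_path src tgt u p w" and "length ls = length p"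
    and legal: "\<And>i. Suc i < length ls \<Longrightarrow> legal_letters (ls ! i) (ls ! Suc i)"
  shows "legal_path (split_legal src tgt) (lift_path ls p)"
  unfolding legal_path_def
proof (intro allI impI)
  fix i
  assume "i + 1 < length (lift_path ls p)"
  then have i: "Suc i < length p" "Suc i < length ls" and "p \<noteq> []"
    using \<open>length ls = length p\<close> by auto
  then have "oend src tgt (p ! i) = ostart src tgt (p ! Suc i)"
    using path by (simp add: edge_path_conv_nth)
  then show "lift_path ls p ! (i + 1) \<noteq> orev (lift_path ls p ! i) \<and>
      split_legal src tgt (orev (lift_path ls p ! i)) (lift_path ls p ! (i + 1))"
    using i legal[OF i(2)] legal_letters_irrefl
    by (auto simp: nth_lift_path orev_def split_legal_def ostart_def oend_def
        split_src_def split_tgt_def split: if_splits)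
qed

lemma split_map_eq_lift_path:
  assumes "odd (length (fe x))" and "\<And>i. i < length (fe x) \<Longrightarrow> snd (fe x ! i) \<longleftrightarrow> even i"
  shows "split_map fe (x, y) = lift_path (phi_letters (length (fe x)) y) (fe x)"
  using assms
  by (intro nth_equalityI)
    (simp_all add: split_map_def lift_path_def phi_letters_def length_phi snd_nth_phi case_prod_beta)

lemma letter_hd_oimg_lift_path:
  assumes "he (x, y) = lift_path ls p" and "length ls = length p" and "p \<noteq> []"
  shows "snd (fst (hd (oimg he ((x, y), b)))) = (if b then hd ls else last ls)"
proof -
  have "ls \<noteq> []" and "lift_path ls p \<noteq> []"
    using assms(2,3) by auto
  with assms show ?thesis
    by (simp add: oimg_def rev_path_def hd_rev last_map del: length_lift_path)
      (simp add: hd_conv_nth last_conv_nth nth_lift_path orev_def)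
qed

lemma split_legal_hd_oimg:
  assumes bip: "bipartite_oriented src tgt V0"
    and gm: "graph_map (split_src src) (split_tgt tgt) fv (split_map fe)"
    and lift: "\<And>x y. split_map fe (x, y) = lift_path (phi_letters (length (fe x)) y) (fe x)"
    and len: "\<And>x y. length (phi_letters (length (fe x)) y) = length (fe x)"
    and ne: "\<And>x. fe x \<noteq> []"
    and legal: "split_legal src tgt d1 d2"
  shows "split_legal src tgt (hd (oimg (split_map fe) d1)) (hd (oimg (split_map fe) d2))"
proof -
  obtain x1 y1 b1 x2 y2 b2 where d: "d1 = ((x1, y1), b1)" "d2 = ((x2, y2), b2)"
    by (metis prod.collapse)
  have "split_map fe e \<noteq> []" for e
    using lift len ne by (cases e) (metis length_0_conv lift_path_eq_Nil_iff)
  then have "ostart (split_src src) (split_tgt tgt) (hd (oimg (split_map fe) d1)) =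
      ostart (split_src src) (split_tgt tgt) (hd (oimg (split_map fe) d2))"
    using ostart_hd_oimg[OF gm] legal by (simp add: split_legal_def)
  moreover have "b1 = b2"
    using legal bipartite_ostart_iff[OF bipartite_oriented_split[OF bip]]
    unfolding split_legal_def d by (metis snd_conv)
  moreover have "legal_letters y1 y2"
    using legal by (simp add: split_legal_def d)
  ultimately show ?thesis
    unfolding split_legal_def d
    by (simp add: letter_hd_oimg_lift_path[where he = "split_map fe", OF lift len ne]
        legal_letters_hd_phi_letters legal_letters_last_phi_letters)
qed

theorem mainTheorem6:
  fixes src tgt :: "'e \<Rightarrow> 'v" and V0 :: "'v set"
    and fv :: "'v \<Rightarrow> 'v" and fe :: "'e \<Rightarrow> 'e oedge list"
  assumes "bipartite_oriented src tgt V0"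
    and "graph_map src tgt fv fe"
    and "\<forall>v. v \<in> V0 \<longrightarrow> fv v \<in> V0"
    and "\<forall>v. v \<notin> V0 \<longrightarrow> fv v \<notin> V0"
    and "\<forall>e. length (fe e) \<ge> 1"
  shows "traintrack_map (split_src src) (split_tgt tgt) fv (split_map fe)"
proof -
  have path: "edge_path src tgt (fv (src x)) (fe x) (fv (tgt x))" for x
    using assms(2) by (simp add: graph_map_def)
  have ends: "fv (src x) \<in> V0" "fv (tgt x) \<notin> V0" for x
    using assms(1,3,4) by (auto simp: bipartite_oriented_def)
  have odd: "odd (length (fe x))" for x
    using bipartite_edge_path_odd_length[OF assms(1) path ends] .
  then have ne: "fe x \<noteq> []" and len: "length (phi_letters (length (fe x)) y) = length (fe x)"
    for x y
    by (metis odd_pos length_greater_0_conv, simp add: length_phi_letters)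
  have lift: "split_map fe (x, y) = lift_path (phi_letters (length (fe x)) y) (fe x)" for x y
    using split_map_eq_lift_path odd bipartite_edge_path_orientation[OF assms(1) path ends(1)] .
  have gm: "graph_map (split_src src) (split_tgt tgt) fv (split_map fe)"
    unfolding graph_map_def
    using edge_path_lift_path[OF path len] lift by (auto simp: split_src_def split_tgt_def)
  have legal_paths: "legal_path (split_legal src tgt) (split_map fe e)" for e
    using legal_path_lift_path[OF path len legal_letters_phi_letters] lift by (metis prod.collapse)
  have "split_map fe e \<noteq> []" for e
    using lift len ne by (cases e) (metis length_0_conv lift_path_eq_Nil_iff)
  then have "taut (split_map fe)"
    using legal_paths by (rule taut_if_legal_paths)
  then show ?thesis
    unfolding traintrack_map_def
    using gm tt_structure_split_legal legal_paths split_legal_hd_oimg[OF assms(1) gm lift len ne]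
    by blast
qed

end
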